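(* Let $G$ be a simple graph and let $t:=\max\{\Delta(G),M(G)\}$, where $\Delta(G)$ is the maximum degree and $M(G)$ the size of a maximum matching of $G$. If $t\geq 6$, then $\operatorname{ex}(G,P_1\cup P_2)=t$.
   Context: $P_1\cup P_2$ is the vertex-disjoint union of a single edge and a path with two edges. $\operatorname{ex}(G,H)$ is the maximum number of edges of a subgraph of $G$ containing no copy of $H$. *)

theory Defs
  imports Main
begin

definition simple_graph :: "'a set \<Rightarrow> 'a set set \<Rightarrow> bool" where
  "simple_graph V E \<longleftrightarrow> finite V \<and> (\<forall>e\<in>E. e \<subseteq> V \<and> card e = 2)"

definition degree :: "'a set set \<Rightarrow> 'a \<Rightarrow> nat" where
  "degree E v = card {e\<in>E. v \<in> e}"

definition max_degree :: "'a set \<Rightarrow> 'a set set \<Rightarrow> nat" where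
  "max_degree V E = Max (insert 0 (degree E ` V))"

definition matching :: "'a set set \<Rightarrow> 'a set set \<Rightarrow> bool" where
  "matching E M \<longleftrightarrow> M \<subseteq> E \<and> (\<forall>e\<in>M. \<forall>f\<in>M. e \<noteq> f \<longrightarrow> e \<inter> f = {})"

definition matching_number :: "'a set set \<Rightarrow> nat" where
  "matching_number E = Max (card ` {M. matching E M})"

definition contains_copy :: "'a set \<Rightarrow> 'a set set \<Rightarrow> 'b set \<Rightarrow> 'b set set \<Rightarrow> bool" where
  "contains_copy V E VH EH \<longleftrightarrow>
     (\<exists>f. inj_on f VH \<and> f ` VH \<subseteq> V \<and> (\<forall>e\<in>EH. f ` e \<in> E))"

text \<open>P_1 \<union> P_2: a single edge {0,1} disjoint from a path 2-3-4 with two edges.\<close>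
definition P1_P2_vertices :: "nat set" where
  "P1_P2_vertices = {0,1,2,3,4}"

definition P1_P2_edges :: "nat set set" where
  "P1_P2_edges = {{0,1},{2,3},{3,4}}"

definition ex :: "'a set \<Rightarrow> 'a set set \<Rightarrow> 'b set \<Rightarrow> 'b set set \<Rightarrow> nat" where
  "ex V E VH EH = Max {card F | F. F \<subseteq> E \<and> \<not> contains_copy V F VH EH}"

end

theory Submission
  imports Defs
begin

text \<open>Let \<open>F\<close> be a subgraph without a copy of \<open>P\<^sub>1 \<union> P\<^sub>2\<close>. If \<open>F\<close> is a matching it has
  at most \<open>M(G)\<close> edges, and if all its edges share a vertex it has at most \<open>\<Delta>(G)\<close> edges.
  Otherwise \<open>F\<close> contains a path \<open>a b c\<close> and an edge avoiding \<open>b\<close>; every edge must meet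
  \<open>{a, b, c}\<close>, and a short case analysis confines all edges to four vertices, so \<open>F\<close> has
  at most \<open>6 \<le> t\<close> edges. Conversely, a star at a vertex of maximum degree and a maximum
  matching contain no \<open>P\<^sub>1 \<union> P\<^sub>2\<close>, so \<open>t\<close> is attained.\<close>

definition P1_P2_free :: "'a set set \<Rightarrow> bool" where
  "P1_P2_free F \<longleftrightarrow>
     \<not> (\<exists>a b c d e. distinct [a, b, c, d, e] \<and> {a, b} \<in> F \<and> {c, d} \<in> F \<and> {d, e} \<in> F)"

lemma P1_P2_freeD:
  "P1_P2_free F \<Longrightarrow> {a, b} \<in> F \<Longrightarrow> {c, d} \<in> F \<Longrightarrow> {d, e} \<in> F \<Longrightarrow> distinct [a, b, c, d, e]
    \<Longrightarrow> False"
  unfolding P1_P2_free_def by blast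

lemma contains_copy_P1_P2_iff:
  assumes "\<forall>e\<in>F. e \<subseteq> V"
  shows "contains_copy V F P1_P2_vertices P1_P2_edges \<longleftrightarrow> \<not> P1_P2_free F"
proof
  assume "contains_copy V F P1_P2_vertices P1_P2_edges"
  then obtain f where f: "inj_on f P1_P2_vertices" "\<forall>e\<in>P1_P2_edges. f ` e \<in> F"
    unfolding contains_copy_def by blast
  have "distinct [f 0, f 1, f 2, f 3, f 4]"
    using f(1) unfolding inj_on_def P1_P2_vertices_def
    by (simp only: ball_simps distinct.simps list.set) auto
  moreover have "{f 0, f 1} \<in> F" "{f 2, f 3} \<in> F" "{f 3, f 4} \<in> F"
    using f(2) unfolding P1_P2_edges_def by auto
  ultimately show "\<not> P1_P2_free F"
    unfolding P1_P2_free_def by blast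
next
  assume "\<not> P1_P2_free F"
  then obtain a b c d e where
    dist: "distinct [a, b, c, d, e]" and edges: "{a, b} \<in> F" "{c, d} \<in> F" "{d, e} \<in> F"
    unfolding P1_P2_free_def by blast
  define f where
    "f = (\<lambda>n::nat. if n = 0 then a else if n = 1 then b else if n = 2 then c
                    else if n = 3 then d else e)"
  have "inj_on f P1_P2_vertices"
    using dist unfolding inj_on_def P1_P2_vertices_def f_def by auto
  moreover have "f ` P1_P2_vertices \<subseteq> V"
    using assms edges unfolding P1_P2_vertices_def f_def by auto
  moreover have "\<forall>e\<in>P1_P2_edges. f ` e \<in> F"
    using edges unfolding P1_P2_edges_def f_def by (auto simp: insert_commute)
  ultimately show "contains_copy V F P1_P2_vertices P1_P2_edges"
    unfolding contains_copy_def by blast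
qed

lemma P1_P2_free_star:
  assumes "\<forall>e\<in>F. v \<in> e"
  shows "P1_P2_free F"
proof (unfold P1_P2_free_def, clarify)
  fix a b c d e
  assume dist: "distinct [a, b, c, d, e]" and edges: "{a, b} \<in> F" "{c, d} \<in> F" "{d, e} \<in> F"
  have "v \<in> {a, b}" "v \<in> {c, d}" "v \<in> {d, e}"
    using assms edges by (auto dest: bspec)
  with dist show False
    by auto
qed

lemma P1_P2_free_matching:
  assumes "matching E M"
  shows "P1_P2_free M"
proof (unfold P1_P2_free_def, clarify)
  fix a b c d e
  assume dist: "distinct [a, b, c, d, e]" and cd: "{c, d} \<in> M" and de: "{d, e} \<in> M"
  have "{c, d} \<noteq> {d, e}"
    using dist by (auto simp: doubleton_eq_iff)
  moreover have "\<forall>e\<in>M. \<forall>f\<in>M. e \<noteq> f \<longrightarrow> e \<inter> f = {}"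
    using assms unfolding matching_def by simp
  ultimately have "{c, d} \<inter> {d, e} = {}"
    using cd de by simp
  then show False
    by simp
qed

lemma card_2_obtain_other:
  assumes "card e = 2" "w \<in> e"
  obtains u where "u \<noteq> w" "e = {w, u}"
proof -
  obtain x y where "e = {x, y}" "x \<noteq> y"
    using assms(1) by (auto simp: card_2_iff)
  with assms(2) that show thesis
    by (metis insert_commute insertE singletonD)
qed

lemma P1_P2_free_edge_meets_path:
  assumes free: "P1_P2_free F" and card2: "\<forall>e\<in>F. card e = 2"
    and ab: "{a, b} \<in> F" and bc: "{b, c} \<in> F" and dist: "distinct [a, b, c]"
    and e: "e \<in> F"
  shows "e \<inter> {a, b, c} \<noteq> {}"
proof
  assume disj: "e \<inter> {a, b, c} = {}"
  obtain u z where "e = {u, z}" "u \<noteq> z"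
    using card2 e by (auto simp: card_2_iff)
  then show False
    using P1_P2_freeD[OF free _ ab bc, of u z] e disj dist by auto
qed

lemma P1_P2_free_edges_within_path:
  assumes free: "P1_P2_free F" and card2: "\<forall>e\<in>F. card e = 2"
    and xa: "{x, a} \<in> F" and ab: "{a, b} \<in> F" and bc: "{b, c} \<in> F"
    and dist: "distinct [x, a, b, c]"
  shows "\<forall>e\<in>F. e \<subseteq> {x, a, b, c}"
proof (intro ballI subsetI, rule ccontr)
  fix e w
  assume e: "e \<in> F" and w: "w \<in> e" "w \<notin> {x, a, b, c}"
  obtain u where u: "u \<noteq> w" "e = {w, u}"
    using card_2_obtain_other card2 e w(1) by metis
  have ax: "{a, x} \<in> F" and cb: "{c, b} \<in> F"
    using xa bc by (simp_all add: insert_commute)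
  have "u \<in> {a, b, c}"
    using P1_P2_free_edge_meets_path[OF free card2 ab bc _ e] u w dist by auto
  moreover have "u \<noteq> a"
    using P1_P2_freeD[OF free bc _ ax, of w] u e w dist by auto
  moreover have "u \<noteq> b"
    using P1_P2_freeD[OF free xa _ bc, of w] u e w dist by auto
  moreover have "u \<noteq> c"
    using P1_P2_freeD[OF free xa _ cb, of w] u e w dist by auto
  ultimately show False
    by blast
qed

lemma P1_P2_free_triangle_pendants_eq:
  assumes free: "P1_P2_free F"
    and ab: "{a, b} \<in> F" and bc: "{b, c} \<in> F" and ca: "{c, a} \<in> F"
    and dist: "distinct [a, b, c]"
    and ay: "{a, y} \<in> F" and y: "y \<notin> {a, b, c}"
    and wz: "{w, z} \<in> F" and w: "w \<in> {a, b, c}" and z: "z \<notin> {a, b, c}"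
  shows "z = y"
proof (rule ccontr)
  assume "z \<noteq> y"
  have ya: "{y, a} \<in> F"
    using ay by (simp add: insert_commute)
  consider "w = a" | "w = b" | "w = c"
    using w by blast
  then show False
  proof cases
    case 1
    then show False
      using P1_P2_freeD[OF free bc ya, of z] wz \<open>z \<noteq> y\<close> dist y z by auto
  next
    case 2
    have "{a, c} \<in> F"
      using ca by (simp add: insert_commute)
    with ya show False
      using P1_P2_freeD[OF free wz, of y a c] 2 \<open>z \<noteq> y\<close> dist y z by auto
  next
    case 3
    with ya show False
      using P1_P2_freeD[OF free wz _ ab, of y] \<open>z \<noteq> y\<close> dist y z by auto
  qed
qed

lemma P1_P2_free_triangle_edges_within:
  assumes free: "P1_P2_free F" and card2: "\<forall>e\<in>F. card e = 2"
    and ab: "{a, b} \<in> F" and bc: "{b, c} \<in> F" and ca: "{c, a} \<in> F"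
    and dist: "distinct [a, b, c]"
  obtains y where "\<forall>e\<in>F. e \<subseteq> {a, b, c, y}"
proof (cases "\<exists>e\<in>F. \<not> e \<subseteq> {a, b, c}")
  case False
  then show thesis
    using that[of a] by blast
next
  case True
  then obtain e0 y where e0: "e0 \<in> F" "y \<in> e0" "y \<notin> {a, b, c}"
    by blast
  have other_end_on_triangle: "u \<in> {a, b, c}" if "e \<in> F" "e = {w, u}" "w \<notin> {a, b, c}" for e w u
    using P1_P2_free_edge_meets_path[OF free card2 ab bc dist] that by blast
  have "\<forall>e\<in>F. e \<subseteq> {a, b, c, y}"
  proof (intro ballI subsetI, rule ccontr)
    fix e z
    assume e: "e \<in> F" and z: "z \<in> e" "z \<notin> {a, b, c, y}"
    obtain w where "e = {z, w}"
      using card_2_obtain_other card2 e z(1) by metis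
    moreover obtain u where "e0 = {y, u}"
      using card_2_obtain_other card2 e0(1,2) by metis
    ultimately have wz: "{w, z} \<in> F" and uy: "{u, y} \<in> F" and "w \<in> {a, b, c}" "u \<in> {a, b, c}"
      using other_end_on_triangle e e0 z by (auto simp: insert_commute)
    then consider "u = a" | "u = b" | "u = c"
      by blast
    \<comment> \<open>The triangle is given cyclically, so each rotation reuses the edge facts \<open>ab bc ca\<close>.\<close>
    then have "z = y"
    proof cases
      case 1
      then show "z = y"
        using P1_P2_free_triangle_pendants_eq[OF free ab bc ca dist _ _ wz] uy
          \<open>w \<in> {a, b, c}\<close> e0(3) z by auto
    next
      case 2
      then show "z = y"
        using P1_P2_free_triangle_pendants_eq[OF free bc ca ab _ _ _ wz] uy dist
          \<open>w \<in> {a, b, c}\<close> e0(3) z by auto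
    next
      case 3
      then show "z = y"
        using P1_P2_free_triangle_pendants_eq[OF free ca ab bc _ _ _ wz] uy dist
          \<open>w \<in> {a, b, c}\<close> e0(3) z by auto
    qed
    with z show False
      by blast
  qed
  then show thesis
    by (rule that)
qed

lemma card_edges_le_choose_2:
  assumes "finite S" "\<forall>e\<in>F. e \<subseteq> S \<and> card e = 2"
  shows "card F \<le> card S choose 2"
proof -
  have "F \<subseteq> {e. e \<subseteq> S \<and> card e = 2}"
    using assms(2) by blast
  moreover have "finite {e. e \<subseteq> S \<and> card e = 2}"
    using assms(1) by simp
  ultimately have "card F \<le> card {e. e \<subseteq> S \<and> card e = 2}"
    by (rule card_mono[rotated])
  also have "\<dots> = card S choose 2"
    using assms(1) by (rule n_subsets)
  finally show ?thesis .
qed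

lemma card_edges_within_four_le_6:
  assumes "finite S" "card S \<le> 4" "\<forall>e\<in>F. e \<subseteq> S \<and> card e = 2"
  shows "card F \<le> 6"
proof -
  have "card S * (card S - 1) \<le> 4 * 3"
    using assms(2) by (intro mult_le_mono) auto
  then have "card S choose 2 \<le> 6"
    unfolding choose_two by linarith
  with card_edges_le_choose_2[OF assms(1,3)] show ?thesis
    by linarith
qed

lemma P1_P2_free_edges_within_four:
  assumes free: "P1_P2_free F" and card2: "\<forall>e\<in>F. card e = 2"
    and ab: "{a, b} \<in> F" and bc: "{b, c} \<in> F" and dist: "distinct [a, b, c]"
    and ax: "{a, x} \<in> F" and xb: "x \<noteq> b"
  obtains S where "finite S" "card S \<le> 4" "\<forall>e\<in>F. e \<subseteq> S"
proof (cases "x = c")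
  case True
  have ca: "{c, a} \<in> F"
    using ax True by (simp add: insert_commute)
  obtain y where within: "\<forall>e\<in>F. e \<subseteq> {a, b, c, y}"
    using P1_P2_free_triangle_edges_within[OF free card2 ab bc ca dist] .
  have "card {a, b, c, y} \<le> 4"
    using card_length[of "[a, b, c, y]"] by simp
  with within show thesis
    by (intro that[of "{a, b, c, y}"]) simp_all
next
  case False
  have "card {a, x} = 2"
    using card2 ax by blast
  then have "x \<noteq> a"
    by auto
  with False xb dist have dist': "distinct [x, a, b, c]"
    by auto
  have xa: "{x, a} \<in> F"
    using ax by (simp add: insert_commute)
  have within: "\<forall>e\<in>F. e \<subseteq> {x, a, b, c}"
    using P1_P2_free_edges_within_path[OF free card2 xa ab bc dist'] .
  have "card {x, a, b, c} \<le> 4"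
    using card_length[of "[x, a, b, c]"] by simp
  with within show thesis
    by (intro that[of "{x, a, b, c}"]) simp_all
qed

lemma card_P1_P2_free_le_6:
  assumes free: "P1_P2_free F" and card2: "\<forall>e\<in>F. card e = 2"
    and ab: "{a, b} \<in> F" and bc: "{b, c} \<in> F" and dist: "distinct [a, b, c]"
    and no_common_vertex: "\<forall>v. \<exists>e\<in>F. v \<notin> e"
  shows "card F \<le> 6"
proof -
  obtain f where f: "f \<in> F" "b \<notin> f"
    using no_common_vertex by blast
  have "f \<inter> {a, b, c} \<noteq> {}"
    using P1_P2_free_edge_meets_path[OF free card2 ab bc dist f(1)] .
  with f(2) have "a \<in> f \<or> c \<in> f"
    by blast
  then obtain S where S: "finite S" "card S \<le> 4" "\<forall>e\<in>F. e \<subseteq> S"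
  proof
    assume "a \<in> f"
    then obtain x where "f = {a, x}"
      using card_2_obtain_other card2 f(1) by metis
    with f have "{a, x} \<in> F" "x \<noteq> b"
      by auto
    then show thesis
      using P1_P2_free_edges_within_four[OF free card2 ab bc dist] that by metis
  next
    assume "c \<in> f"
    then obtain x where "f = {c, x}"
      using card_2_obtain_other card2 f(1) by metis
    with f have "{c, x} \<in> F" "x \<noteq> b"
      by auto
    moreover have "{c, b} \<in> F" "{b, a} \<in> F" "distinct [c, b, a]"
      using ab bc dist by (auto simp: insert_commute)
    ultimately show thesis
      using P1_P2_free_edges_within_four[OF free card2] that by metis
  qed
  moreover have "\<forall>e\<in>F. e \<subseteq> S \<and> card e = 2"
    using S(3) card2 by simp
  ultimately show ?thesis
    using card_edges_within_four_le_6 by blast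
qed

lemma simple_graph_finite_edges:
  assumes "simple_graph V E"
  shows "finite E"
proof (rule finite_subset)
  show "E \<subseteq> Pow V"
    using assms unfolding simple_graph_def by blast
  show "finite (Pow V)"
    using assms unfolding simple_graph_def by simp
qed

lemma degree_le_max_degree:
  assumes "finite V" "v \<in> V"
  shows "degree E v \<le> max_degree V E"
  unfolding max_degree_def using assms by (intro Max_ge) auto

lemma max_degree_attained:
  assumes "finite V" "max_degree V E \<noteq> 0"
  obtains v where "v \<in> V" "degree E v = max_degree V E"
proof -
  have "max_degree V E \<in> insert 0 (degree E ` V)"
    unfolding max_degree_def using assms(1) by (intro Max_in) auto
  with assms(2) obtain v where "v \<in> V" "max_degree V E = degree E v"
    by auto
  then show thesis
    using that by simp
qed

lemma finite_matchings:
  assumes "finite E"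
  shows "finite {M. matching E M}"
proof (rule finite_subset)
  show "{M. matching E M} \<subseteq> Pow E"
    unfolding matching_def by blast
  show "finite (Pow E)"
    using assms by simp
qed

lemma card_le_matching_number:
  assumes "finite E" "matching E M"
  shows "card M \<le> matching_number E"
  unfolding matching_number_def using assms finite_matchings by (intro Max_ge) auto

lemma matching_number_attained:
  assumes "finite E"
  obtains M where "matching E M" "card M = matching_number E"
proof -
  have "matching E {}"
    unfolding matching_def by simp
  then have "matching_number E \<in> card ` {M. matching E M}"
    unfolding matching_number_def using assms finite_matchings by (intro Max_in) auto
  then obtain M where "matching E M" "matching_number E = card M"
    by auto
  then show thesis
    using that by simp
qed

lemma card_P1_P2_free_subgraph_le:
  assumes G: "simple_graph V E" and FE: "F \<subseteq> E" and free: "P1_P2_free F"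
  shows "card F \<le> max (max (max_degree V E) (matching_number E)) 6"
proof -
  have finE: "finite E" and finV: "finite V"
    using G simple_graph_finite_edges unfolding simple_graph_def by auto
  have card2: "\<forall>e\<in>F. card e = 2"
    using G FE unfolding simple_graph_def by blast
  show ?thesis
  proof (cases "matching E F")
    case True
    then show ?thesis
      using card_le_matching_number[OF finE] by fastforce
  next
    case False
    then obtain e1 e2 w where e: "e1 \<in> F" "e2 \<in> F" "e1 \<noteq> e2" "w \<in> e1" "w \<in> e2"
      using FE unfolding matching_def by blast
    obtain a where a: "e1 = {w, a}"
      using card_2_obtain_other card2 e(1,4) by metis
    obtain c where c: "e2 = {w, c}"
      using card_2_obtain_other card2 e(2,5) by metis
    have aw: "{a, w} \<in> F" and wc: "{w, c} \<in> F"
      using a c e(1,2) by (simp_all add: insert_commute)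
    have "distinct [a, w, c]"
      using a c e(3) card2 e(1,2) by (auto simp: card_insert_if)
    show ?thesis
    proof (cases "\<exists>v. \<forall>e\<in>F. v \<in> e")
      case True
      then obtain v where v: "\<forall>e\<in>F. v \<in> e"
        by blast
      have "v \<in> V"
        using v e(1) FE G unfolding simple_graph_def by blast
      have "F \<subseteq> {e \<in> E. v \<in> e}"
        using v FE by blast
      then have "card F \<le> degree E v"
        unfolding degree_def using finE by (intro card_mono) auto
      also have "\<dots> \<le> max_degree V E"
        using degree_le_max_degree[OF finV \<open>v \<in> V\<close>] .
      finally show ?thesis
        by linarith
    next
      case False
      then have "card F \<le> 6"
        using card_P1_P2_free_le_6[OF free card2 aw wc \<open>distinct [a, w, c]\<close>] by blast
      then show ?thesis
        by linarith
    qed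
  qed
qed

lemma P1_P2_free_subgraph_of_card_max:
  assumes G: "simple_graph V E"
  obtains F where "F \<subseteq> E" "P1_P2_free F" "card F = max (max_degree V E) (matching_number E)"
proof (cases "matching_number E \<le> max_degree V E")
  case True
  show thesis
  proof (cases "max_degree V E = 0")
    case True
    with \<open>matching_number E \<le> max_degree V E\<close> show thesis
      using that[of "{}"] P1_P2_free_star[of "{}"] by simp
  next
    case False
    have "finite V"
      using G unfolding simple_graph_def by simp
    then obtain v where "v \<in> V" "degree E v = max_degree V E"
      using max_degree_attained False by metis
    with \<open>matching_number E \<le> max_degree V E\<close> show thesis
      using that[of "{e \<in> E. v \<in> e}"] P1_P2_free_star[of "{e \<in> E. v \<in> e}" v]
      unfolding degree_def by auto
  qed
next
  case False
  obtain M where "matching E M" "card M = matching_number E"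
    using matching_number_attained[OF simple_graph_finite_edges[OF G]] .
  with False show thesis
    using that[of M] P1_P2_free_matching unfolding matching_def by auto
qed

lemma ex_eqI:
  assumes "finite E" and witness: "F\<^sub>0 \<subseteq> E" "\<not> contains_copy V F\<^sub>0 VH EH" "card F\<^sub>0 = t"
    and bound: "\<And>F. F \<subseteq> E \<Longrightarrow> \<not> contains_copy V F VH EH \<Longrightarrow> card F \<le> t"
  shows "ex V E VH EH = t"
  unfolding ex_def
proof (rule Max_eqI)
  show "finite {card F |F. F \<subseteq> E \<and> \<not> contains_copy V F VH EH}"
    using assms(1) by simp
qed (use witness bound in auto)

theorem corollary3p18:
  fixes V :: "'a set" and E :: "'a set set"
  assumes "simple_graph V E"
    and "max (max_degree V E) (matching_number E) \<ge> 6"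
  shows "ex V E P1_P2_vertices P1_P2_edges = max (max_degree V E) (matching_number E)"
proof -
  let ?t = "max (max_degree V E) (matching_number E)"
  have edges_in_V: "\<forall>e\<in>E. e \<subseteq> V" and finE: "finite E"
    using assms(1) simple_graph_finite_edges unfolding simple_graph_def by auto
  have no_copy_iff: "contains_copy V F P1_P2_vertices P1_P2_edges \<longleftrightarrow> \<not> P1_P2_free F"
    if "F \<subseteq> E" for F
    using contains_copy_P1_P2_iff edges_in_V that by blast
  obtain F\<^sub>0 where F\<^sub>0: "F\<^sub>0 \<subseteq> E" "P1_P2_free F\<^sub>0" "card F\<^sub>0 = ?t"
    using P1_P2_free_subgraph_of_card_max[OF assms(1)] .
  show ?thesis
  proof (rule ex_eqI[OF finE F\<^sub>0(1) _ F\<^sub>0(3)])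
    show "\<not> contains_copy V F\<^sub>0 P1_P2_vertices P1_P2_edges"
      using no_copy_iff F\<^sub>0(1,2) by blast
    show "card F \<le> ?t" if "F \<subseteq> E" "\<not> contains_copy V F P1_P2_vertices P1_P2_edges" for F
      using card_P1_P2_free_subgraph_le[OF assms(1)] no_copy_iff that assms(2) by fastforce
  qed
qed

end
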